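(* (1) Let $(S,K,I)$ be an active split graph. Then $S$ is prime if and only if $\Phi(S)$ is connected. (2) Let $(S_1,K_1,I_1),\dots,(S_n,K_n,I_n)$ be pairwise vertex-disjoint prime split graphs and let $S=S_1\circ S_2\circ\cdots\circ S_n$, regarded as a split graph with bipartition $(K_1\cup\dots\cup K_n,\ I_1\cup\dots\cup I_n)$. Then $\Phi(S)=\Phi(S_1)\,\dot\cup\,\cdots\,\dot\cup\,\Phi(S_n)$ (disjoint union of multigraphs). (3) If $G$ is an active graph and $G=G_n\circ\cdots\circ G_1$ is its Tyshkevich decomposition into indecomposable factors each having at least one vertex (with $G_2,\dots,G_n$ split), then every factor $G_r$ is prime.
   Context: All graphs are finite and simple. A split graph is a graph $S$ whose vertex set is a disjoint union $V(S)=K\,\dot\cup\,I$ with $K$ a clique and $I$ an independent set; $(K,I)$ is called a bipartition of $S$, and $(S,K,I)$ denotes $S$ together with this fixed bipartition. A 2-switch in a graph $G$ is performed on four distinct vertices $a,b,c,d$ with $ab,cd\in E(G)$ and $ac,bd\notin E(G)$: it deletes $ab,cd$ and adds $ac,bd$; $a,b,c,d$ are said to participate in it. A vertex is active in $G$ if it participates in some 2-switch on $G$, otherwise inactive; $G$ is active if all its vertices are active. For a split graph $(S,K,I)$ and distinct $u,v\in I$, $\sigma_{uv}(S)$ is the number of induced subgraphs of $S$ isomorphic to $P_4$ containing both $u$ and $v$. The factor graph $\Phi(S)$ is the loopless multigraph with vertex set $I$ having exactly $\sigma_{uv}(S)$ parallel edges between $u$ and $v$. Graph notions (connected, complete, clique,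 etc.) applied to $\Phi(S)$ refer to its underlying simple graph, in which $u\sim v$ iff $\sigma_{uv}(S)\ge1$. Tyshkevich composition: for a split graph $(S,K,I)$ and a graph $G$ vertex-disjoint from $S$, $S\circ G$ is the graph with vertex set $V(S)\cup V(G)$ and edge set $E(S)\cup E(G)\cup\{xy: x\in K,\ y\in V(G)\}$ (a composition of a split graph with a split graph is split, with clique the union of the cliques and independent set the union of the independent sets). A graph $G$ is decomposable if $G=S\circ H$ for some split graph $S$ and graph $H$, each with at least one vertex; otherwise indecomposable. A graph is prime if it is active and indecomposable. Tyshkevich's theorem (known): every graph $G$ can be written as $G=G_n\circ\cdots\circ G_1$ with each $G_r$ indecomposable and $G_2,\dots,G_n$ split; with all $|G_r|\ge1$ this decomposition is unique up to isomorphism. *)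

theory Defs
  imports Main
begin

definition graph :: "'a set \<Rightarrow> 'a set set \<Rightarrow> bool" where
  "graph V E \<longleftrightarrow> finite V \<and> E \<subseteq> {{x, y} | x y. x \<in> V \<and> y \<in> V \<and> x \<noteq> y}"

definition split_graph :: "'a set \<Rightarrow> 'a set set \<Rightarrow> 'a set \<Rightarrow> 'a set \<Rightarrow> bool" where
  "split_graph V E K I \<longleftrightarrow> graph V E \<and> K \<inter> I = {} \<and> V = K \<union> I
     \<and> (\<forall>x\<in>K. \<forall>y\<in>K. x \<noteq> y \<longrightarrow> {x, y} \<in> E)
     \<and> (\<forall>x\<in>I. \<forall>y\<in>I. {x, y} \<notin> E)"

definition two_switch :: "'a set \<Rightarrow> 'a set set \<Rightarrow> 'a \<Rightarrow> 'a \<Rightarrow> 'a \<Rightarrow> 'a \<Rightarrow> bool" where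
  "two_switch V E a b c d \<longleftrightarrow> a \<in> V \<and> b \<in> V \<and> c \<in> V \<and> d \<in> V \<and> distinct [a, b, c, d]
     \<and> {a, b} \<in> E \<and> {c, d} \<in> E \<and> {a, c} \<notin> E \<and> {b, d} \<notin> E"

definition active_vertex :: "'a set \<Rightarrow> 'a set set \<Rightarrow> 'a \<Rightarrow> bool" where
  "active_vertex V E v \<longleftrightarrow> (\<exists>a b c d. two_switch V E a b c d \<and> v \<in> {a, b, c, d})"

definition active :: "'a set \<Rightarrow> 'a set set \<Rightarrow> bool" where
  "active V E \<longleftrightarrow> (\<forall>v\<in>V. active_vertex V E v)"

definition compose :: "'a set \<Rightarrow> 'a set set \<Rightarrow> 'a set \<Rightarrow> 'a set \<times> 'a set set \<Rightarrow> 'a set \<times> 'a set set" where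
  "compose VS ES K H = (VS \<union> fst H, ES \<union> snd H \<union> {{x, y} | x y. x \<in> K \<and> y \<in> fst H})"

definition decomposable :: "'a set \<Rightarrow> 'a set set \<Rightarrow> bool" where
  "decomposable V E \<longleftrightarrow> (\<exists>VS ES K I VH EH. split_graph VS ES K I \<and> graph VH EH
      \<and> VS \<noteq> {} \<and> VH \<noteq> {} \<and> VS \<inter> VH = {} \<and> (V, E) = compose VS ES K (VH, EH))"

definition prime_graph :: "'a set \<Rightarrow> 'a set set \<Rightarrow> bool" where
  "prime_graph V E \<longleftrightarrow> active V E \<and> \<not> decomposable V E"

definition induces_P4 :: "'a set set \<Rightarrow> 'a set \<Rightarrow> bool" where
  "induces_P4 E W \<longleftrightarrow> (\<exists>a b c d. distinct [a, b, c, d] \<and> W = {a, b, c, d}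
      \<and> {e \<in> E. e \<subseteq> W} = {{a, b}, {b, c}, {c, d}})"

definition sigma :: "'a set \<Rightarrow> 'a set set \<Rightarrow> 'a \<Rightarrow> 'a \<Rightarrow> nat" where
  "sigma V E u v = card {W. W \<subseteq> V \<and> u \<in> W \<and> v \<in> W \<and> induces_P4 E W}"

text \<open>Loopless multigraph: vertex set plus multiplicity function (zero outside / on the diagonal).
  The factor graph of (S,K,I), S = (K \<union> I, E).\<close>
definition factor_graph :: "'a set \<Rightarrow> 'a set \<Rightarrow> 'a set set \<Rightarrow> 'a set \<times> ('a \<Rightarrow> 'a \<Rightarrow> nat)" where
  "factor_graph K I E = (I, \<lambda>u v. if u \<in> I \<and> v \<in> I \<and> u \<noteq> v then sigma (K \<union> I) E u v else 0)"

definition mg_connected :: "'a set \<times> ('a \<Rightarrow> 'a \<Rightarrow> nat) \<Rightarrow> bool" where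
  "mg_connected M \<longleftrightarrow> (\<forall>u\<in>fst M. \<forall>v\<in>fst M.
      (u, v) \<in> {(x, y). x \<in> fst M \<and> y \<in> fst M \<and> snd M x y \<ge> 1}\<^sup>*)"

fun comp_up :: "(nat \<Rightarrow> 'a set) \<Rightarrow> (nat \<Rightarrow> 'a set set) \<Rightarrow> (nat \<Rightarrow> 'a set) \<Rightarrow> nat \<Rightarrow> nat
    \<Rightarrow> 'a set \<times> 'a set set" where
  "comp_up Vs Es Ks i 0 = ({}, {})"
| "comp_up Vs Es Ks i (Suc k) = compose (Vs i) (Es i) (Ks i) (comp_up Vs Es Ks (Suc i) k)"

text \<open>G_n o G_(n-1) o ... o G_1 (right-nested; G_1 composed with the empty graph is G_1).\<close>
fun comp_down :: "(nat \<Rightarrow> 'a set) \<Rightarrow> (nat \<Rightarrow> 'a set set) \<Rightarrow> (nat \<Rightarrow> 'a set) \<Rightarrow> nat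
    \<Rightarrow> 'a set \<times> 'a set set" where
  "comp_down Vs Es Ks 0 = ({}, {})"
| "comp_down Vs Es Ks (Suc k) = compose (Vs (Suc k)) (Es (Suc k)) (Ks (Suc k)) (comp_down Vs Es Ks k)"

end

(* In a Tyshkevich composition S o H every 2-switch, and hence every induced P4, lies inside S or
   inside H: a clique vertex of S sees all of H and an independent vertex of S sees none of it, so
   the alternating cycle edge/non-edge/edge/non-edge of a 2-switch cannot cross between the parts.
   This locality survives iterated composition, which gives (2) (the induced P4s through u and v,
   and so sigma(u,v), are counted factor by factor) and (3) (the 2-switches witnessing activity live
   in single factors).
   For (1), sigma(u,v) > 0 exactly when the clique neighbourhoods N(u), N(v) are incomparable.
   If Phi(S) is disconnected, the union K1 of the neighbourhoods along a component, together with
   the independent vertices whose neighbourhood misses part of K1, splits off as the first factor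
   of a composition. Conversely, a composition of an active graph has independent vertices in both
   parts, and since no induced P4 crosses, no edge of Phi(S) joins them. *)

theory Submission
  imports Defs
begin

lemma graph_edgeE:
  assumes "graph V E" "e \<in> E"
  obtains x y where "e = {x, y}" "x \<in> V" "y \<in> V" "x \<noteq> y"
  using assms unfolding graph_def by blast

lemma graph_edge_vertices:
  "graph V E \<Longrightarrow> {x, y} \<in> E \<Longrightarrow> x \<in> V \<and> y \<in> V \<and> x \<noteq> y"
  unfolding graph_def by (auto simp: doubleton_eq_iff)

lemma graph_empty: "graph {} {}"
  by (simp add: graph_def)

lemma graph_induced:
  assumes "graph V E" "W \<subseteq> V"
  shows "graph W {e \<in> E. e \<subseteq> W}"
  unfolding graph_def
proof
  show "finite W"
    using assms finite_subset unfolding graph_def by blast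
  show "{e \<in> E. e \<subseteq> W} \<subseteq> {{x, y} | x y. x \<in> W \<and> y \<in> W \<and> x \<noteq> y}"
  proof
    fix e assume e: "e \<in> {e \<in> E. e \<subseteq> W}"
    then obtain x y where "e = {x, y}" "x \<noteq> y"
      using graph_edgeE[OF assms(1)] by blast
    with e show "e \<in> {{x, y} | x y. x \<in> W \<and> y \<in> W \<and> x \<noteq> y}"
      by blast
  qed
qed

lemma two_switch_cong:
  assumes "{a, b, c, d} \<subseteq> W" "W \<subseteq> V" "W \<subseteq> V'" "{e \<in> E. e \<subseteq> W} = {e \<in> E'. e \<subseteq> W}"
  shows "two_switch V E a b c d \<longleftrightarrow> two_switch V' E' a b c d"
proof -
  have "{x, y} \<in> E \<longleftrightarrow> {x, y} \<in> E'" if "x \<in> W" "y \<in> W" for x y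
    using that assms(4) by blast
  moreover have "a \<in> W" "b \<in> W" "c \<in> W" "d \<in> W"
    using assms(1) by auto
  ultimately show ?thesis
    using assms(2,3) unfolding two_switch_def by auto
qed

lemma induces_P4_cong:
  "{e \<in> E. e \<subseteq> W} = {e \<in> E'. e \<subseteq> W} \<Longrightarrow> induces_P4 E W \<longleftrightarrow> induces_P4 E' W"
  by (simp add: induces_P4_def)

text \<open>The path a-b-c-d carries the 2-switch deleting ab, cd and adding ac, bd.\<close>
lemma induces_P4_two_switch:
  assumes "W \<subseteq> V" "induces_P4 E W"
  obtains a b c d where "W = {a, b, c, d}" "two_switch V E a b c d"
proof -
  obtain a b c d where abcd: "distinct [a, b, c, d]" "W = {a, b, c, d}"
    and edges: "{e \<in> E. e \<subseteq> W} = {{a, b}, {b, c}, {c, d}}"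
    using assms(2) unfolding induces_P4_def by blast
  have "{a, b} \<in> {e \<in> E. e \<subseteq> W}" "{c, d} \<in> {e \<in> E. e \<subseteq> W}"
    unfolding edges by simp_all
  then have edges_in: "{a, b} \<in> E" "{c, d} \<in> E"
    by simp_all
  have "{a, c} \<notin> {{a, b}, {b, c}, {c, d}}" "{b, d} \<notin> {{a, b}, {b, c}, {c, d}}"
    using abcd(1) by (auto simp: doubleton_eq_iff)
  moreover have "{a, c} \<subseteq> W" "{b, d} \<subseteq> W"
    using abcd(2) by auto
  ultimately have "{a, c} \<notin> E" "{b, d} \<notin> E"
    unfolding edges[symmetric] by simp_all
  with edges_in abcd assms(1) have "two_switch V E a b c d"
    unfolding two_switch_def by simp
  with abcd(2) show thesis by (rule that)
qed

lemma two_switch_sym: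
  assumes "two_switch V E a b c d"
  shows "two_switch V E b a d c" "two_switch V E c d a b"
  using assms by (auto simp: two_switch_def insert_commute)

section \<open>Tyshkevich composition\<close>

locale tyshkevich_composition =
  fixes V E VS ES K I VH EH
  assumes split_S: "split_graph VS ES K I"
    and graph_H: "graph VH EH"
    and disjoint: "VS \<inter> VH = {}"
    and composition: "(V, E) = compose VS ES K (VH, EH)"
begin

lemma V_eq: "V = VS \<union> VH"
  using composition by (simp add: compose_def)

lemma E_eq: "E = ES \<union> EH \<union> {{x, y} | x y. x \<in> K \<and> y \<in> VH}"
  using composition by (simp add: compose_def)

lemma graph_S: "graph VS ES"
  and VS_eq: "VS = K \<union> I"
  and K_I_disjoint: "K \<inter> I = {}"
  and clique: "x \<in> K \<Longrightarrow> y \<in> K \<Longrightarrow> x \<noteq> y \<Longrightarrow> {x, y} \<in> ES"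
  and independent: "x \<in> I \<Longrightarrow> y \<in> I \<Longrightarrow> {x, y} \<notin> ES"
  using split_S by (auto simp: split_graph_def)

lemma graph: "graph V E"
  unfolding graph_def
proof
  show "finite V"
    using graph_S graph_H by (simp add: V_eq graph_def)
  show "E \<subseteq> {{x, y} | x y. x \<in> V \<and> y \<in> V \<and> x \<noteq> y}"
  proof
    fix e assume "e \<in> E"
    then consider "e \<in> ES" | "e \<in> EH" | "e \<in> {{x, y} | x y. x \<in> K \<and> y \<in> VH}"
      unfolding E_eq by blast
    then have "\<exists>x y. e = {x, y} \<and> x \<in> V \<and> y \<in> V \<and> x \<noteq> y"
    proof cases
      case 1
      then show ?thesis
        using graph_edgeE[OF graph_S] by (metis UnI1 V_eq)
    next
      case 2
      then show ?thesis
        using graph_edgeE[OF graph_H] by (metis UnI2 V_eq)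
    next
      case 3
      then obtain x y where "e = {x, y}" "x \<in> K" "y \<in> VH"
        by blast
      moreover have "x \<in> V" "y \<in> V" "x \<noteq> y"
        using calculation disjoint by (auto simp: V_eq VS_eq)
      ultimately show ?thesis
        by blast
    qed
    then show "e \<in> {{x, y} | x y. x \<in> V \<and> y \<in> V \<and> x \<noteq> y}"
      by blast
  qed
qed

lemma edges_within_S: "W \<subseteq> VS \<Longrightarrow> {e \<in> E. e \<subseteq> W} = {e \<in> ES. e \<subseteq> W}"
proof -
  assume W: "W \<subseteq> VS"
  have "e \<notin> EH" if "e \<subseteq> W" for e
  proof
    assume "e \<in> EH"
    then obtain x y where "e = {x, y}" "x \<in> VH"
      by (rule graph_edgeE[OF graph_H])
    with that W disjoint show False
      by blast
  qed
  moreover have "e \<notin> {{x, y} | x y. x \<in> K \<and> y \<in> VH}" if "e \<subseteq> W" for e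
    using that W disjoint by auto
  ultimately show ?thesis
    by (auto simp: E_eq)
qed

lemma edges_within_H: "W \<subseteq> VH \<Longrightarrow> {e \<in> E. e \<subseteq> W} = {e \<in> EH. e \<subseteq> W}"
proof -
  assume W: "W \<subseteq> VH"
  have "e \<notin> ES" if "e \<subseteq> W" for e
  proof
    assume "e \<in> ES"
    then obtain x y where "e = {x, y}" "x \<in> VS"
      by (rule graph_edgeE[OF graph_S])
    with that W disjoint show False
      by blast
  qed
  moreover have "e \<notin> {{x, y} | x y. x \<in> K \<and> y \<in> VH}" if "e \<subseteq> W" for e
    using that W disjoint VS_eq by auto
  ultimately show ?thesis
    by (auto simp: E_eq)
qed

lemma edge_within_S_iff: "x \<in> VS \<Longrightarrow> y \<in> VS \<Longrightarrow> {x, y} \<in> E \<longleftrightarrow> {x, y} \<in> ES"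
  using edges_within_S[of "{x, y}"] by blast

lemma edge_across_iff: "x \<in> VS \<Longrightarrow> y \<in> VH \<Longrightarrow> {x, y} \<in> E \<longleftrightarrow> x \<in> K"
  using graph_edge_vertices[OF graph_S, of x y] graph_edge_vertices[OF graph_H, of x y] disjoint
  by (auto simp: E_eq VS_eq doubleton_eq_iff)

lemma non_neighbour_of_K:
  assumes "x \<in> K" "y \<in> V" "x \<noteq> y" "{x, y} \<notin> E"
  shows "y \<in> I"
proof (cases "y \<in> VH")
  case True
  with assms show ?thesis
    using edge_across_iff[of x y] by (simp add: VS_eq)
next
  case False
  with assms(2) have "y \<in> VS"
    by (simp add: V_eq)
  with assms show ?thesis
    using edge_within_S_iff[of x y] clique[of x y] by (auto simp: VS_eq)
qed

lemma neighbour_of_I: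
  assumes "x \<in> I" "y \<in> V" "{x, y} \<in> E"
  shows "y \<in> K"
proof (cases "y \<in> VH")
  case True
  with assms show ?thesis
    using edge_across_iff[of x y] K_I_disjoint by (auto simp: VS_eq)
next
  case False
  with assms(2) have "y \<in> VS"
    by (simp add: V_eq)
  with assms show ?thesis
    using edge_within_S_iff[of x y] independent[of x y] by (auto simp: VS_eq)
qed

text \<open>Chase the alternating cycle a-b, b/d, d-c, c/a with the two previous lemmas.\<close>
lemma two_switch_stays_in_S:
  assumes sw: "two_switch V E a b c d" and "a \<in> VS"
  shows "{a, b, c, d} \<subseteq> VS"
proof -
  have in_V: "a \<in> V" "b \<in> V" "c \<in> V" "d \<in> V" and dist: "a \<noteq> c" "b \<noteq> d"
    and e: "{a, b} \<in> E" "{c, d} \<in> E" "{d, c} \<in> E" "{a, c} \<notin> E" "{b, d} \<notin> E" "{d, b} \<notin> E"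
    using sw by (auto simp: two_switch_def insert_commute)
  show ?thesis
  proof (cases "a \<in> K")
    case True
    then have "c \<in> I" using non_neighbour_of_K in_V dist e by blast
    then have "d \<in> K" using neighbour_of_I in_V e by blast
    then have "b \<in> I" using non_neighbour_of_K in_V dist e by blast
    with \<open>c \<in> I\<close> \<open>d \<in> K\<close> \<open>a \<in> VS\<close> show ?thesis by (simp add: VS_eq)
  next
    case False
    with \<open>a \<in> VS\<close> have "a \<in> I" by (simp add: VS_eq)
    then have "b \<in> K" using neighbour_of_I in_V e by blast
    then have "d \<in> I" using non_neighbour_of_K in_V dist e by blast
    then have "c \<in> K" using neighbour_of_I in_V e by blast
    with \<open>b \<in> K\<close> \<open>d \<in> I\<close> \<open>a \<in> VS\<close> show ?thesis by (simp add: VS_eq)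
  qed
qed

lemma two_switch_within_part:
  assumes sw: "two_switch V E a b c d"
  shows "{a, b, c, d} \<subseteq> VS \<or> {a, b, c, d} \<subseteq> VH"
proof (cases "{a, b, c, d} \<inter> VS = {}")
  case True
  moreover have "{a, b, c, d} \<subseteq> V"
    using sw by (simp add: two_switch_def)
  ultimately show ?thesis
    by (auto simp: V_eq)
next
  case False
  then show ?thesis
    using two_switch_stays_in_S[OF sw] two_switch_stays_in_S[OF two_switch_sym(1)[OF sw]]
      two_switch_stays_in_S[OF two_switch_sym(2)[OF sw]]
      two_switch_stays_in_S[OF two_switch_sym(1)[OF two_switch_sym(2)[OF sw]]]
    by blast
qed

lemma induces_P4_within_part:
  assumes "W \<subseteq> V" "induces_P4 E W"
  shows "W \<subseteq> VS \<or> W \<subseteq> VH"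
  using induces_P4_two_switch[OF assms] two_switch_within_part by metis

end

section \<open>Iterated composition\<close>

definition P4s :: "'a set \<Rightarrow> 'a set set \<Rightarrow> 'a \<Rightarrow> 'a \<Rightarrow> 'a set set" where
  "P4s V E u v = {W. W \<subseteq> V \<and> u \<in> W \<and> v \<in> W \<and> induces_P4 E W}"

lemma sigma_eq_card_P4s: "sigma V E u v = card (P4s V E u v)"
  by (simp add: sigma_def P4s_def)

lemma finite_P4s: "graph V E \<Longrightarrow> finite (P4s V E u v)"
  by (rule finite_subset[of _ "Pow V"]) (auto simp: P4s_def graph_def)

lemma sigma_pos_iff: "graph V E \<Longrightarrow> 1 \<le> sigma V E u v \<longleftrightarrow> P4s V E u v \<noteq> {}"
  by (simp add: sigma_eq_card_P4s Suc_le_eq card_gt_0_iff finite_P4s)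

text \<open>The invariant maintained along an iterated Tyshkevich composition.\<close>
definition local_gluing :: "'a set \<Rightarrow> 'a set set \<Rightarrow> ('i \<Rightarrow> 'a set) \<Rightarrow> ('i \<Rightarrow> 'a set set) \<Rightarrow> 'i set \<Rightarrow> bool"
  where "local_gluing V E Vs Es J \<longleftrightarrow> V = (\<Union>r\<in>J. Vs r) \<and> graph V E
    \<and> (\<forall>r\<in>J. \<forall>W. W \<subseteq> Vs r \<longrightarrow> {e \<in> E. e \<subseteq> W} = {e \<in> Es r. e \<subseteq> W})
    \<and> (\<forall>a b c d. two_switch V E a b c d \<longrightarrow> (\<exists>r\<in>J. {a, b, c, d} \<subseteq> Vs r))"

lemma local_gluingD:
  assumes "local_gluing V E Vs Es J"
  shows local_gluing_vertices: "V = (\<Union>r\<in>J. Vs r)"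
    and local_gluing_edges: "r \<in> J \<Longrightarrow> W \<subseteq> Vs r \<Longrightarrow> {e \<in> E. e \<subseteq> W} = {e \<in> Es r. e \<subseteq> W}"
    and local_gluing_switch: "two_switch V E a b c d \<Longrightarrow> \<exists>r\<in>J. {a, b, c, d} \<subseteq> Vs r"
  using assms unfolding local_gluing_def
  by (simp_all del: insert_subset)

lemma local_gluing_graph: "local_gluing V E Vs Es J \<Longrightarrow> graph V E"
  unfolding local_gluing_def by (elim conjE)

lemma local_gluing_empty: "local_gluing {} {} Vs Es {}"
  by (simp add: local_gluing_def graph_empty two_switch_def)

lemma local_gluing_singleton: "graph (Vs r) (Es r) \<Longrightarrow> local_gluing (Vs r) (Es r) Vs Es {r}"
  by (auto simp: local_gluing_def two_switch_def)

lemma local_gluing_compose: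
  assumes gluing: "local_gluing (fst H) (snd H) Vs Es J"
    and split: "split_graph (Vs i) (Es i) K I"
    and disjoint: "\<forall>r\<in>J. Vs i \<inter> Vs r = {}"
  shows "local_gluing (fst (compose (Vs i) (Es i) K H)) (snd (compose (Vs i) (Es i) K H)) Vs Es (insert i J)"
proof -
  note VH = local_gluing_vertices[OF gluing] and graph_H = local_gluing_graph[OF gluing]
    and edges_H = local_gluing_edges[OF gluing] and switch_H = local_gluing_switch[OF gluing]
  define V where "V = fst (compose (Vs i) (Es i) K H)"
  define E where "E = snd (compose (Vs i) (Es i) K H)"
  interpret tyshkevich_composition V E "Vs i" "Es i" K I "fst H" "snd H"
  proof
    show "Vs i \<inter> fst H = {}"
      using disjoint by (auto simp: VH)
    show "(V, E) = compose (Vs i) (Es i) K (fst H, snd H)"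
      by (simp add: V_def E_def)
  qed (use split graph_H in auto)
  have "{e \<in> E. e \<subseteq> W} = {e \<in> Es r. e \<subseteq> W}" if r: "r \<in> insert i J" and W: "W \<subseteq> Vs r" for r W
  proof (cases "r = i")
    case True
    with W show ?thesis
      by (simp add: edges_within_S)
  next
    case False
    with r have "r \<in> J"
      by simp
    moreover from this W have "W \<subseteq> fst H"
      by (auto simp: VH)
    ultimately show ?thesis
      using W edges_within_H edges_H by simp
  qed
  moreover have "\<exists>r\<in>insert i J. {a, b, c, d} \<subseteq> Vs r" if sw: "two_switch V E a b c d" for a b c d
  proof -
    from sw consider "{a, b, c, d} \<subseteq> Vs i" | "{a, b, c, d} \<subseteq> fst H"
      using two_switch_within_part by blast
    then show ?thesis
    proof cases
      case 2
      have "fst H \<subseteq> V"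
        by (simp add: V_eq)
      with sw 2 have "two_switch (fst H) (snd H) a b c d"
        using two_switch_cong[OF 2 _ subset_refl edges_within_H[OF subset_refl]] by blast
      with switch_H show ?thesis
        by blast
    qed simp
  qed
  moreover have "V = (\<Union>r\<in>insert i J. Vs r)"
    by (simp add: V_eq VH)
  ultimately show ?thesis
    using graph by (simp add: local_gluing_def V_def[symmetric] E_def[symmetric])
qed

lemma local_gluing_comp_up:
  assumes "\<forall>j\<in>{i..<i + k}. split_graph (Vs j) (Es j) (Ks j) (Is j)"
    and "\<forall>r\<in>{i..<i + k}. \<forall>s\<in>{i..<i + k}. r \<noteq> s \<longrightarrow> Vs r \<inter> Vs s = {}"
  shows "local_gluing (fst (comp_up Vs Es Ks i k)) (snd (comp_up Vs Es Ks i k)) Vs Es {i..<i + k}"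
  using assms
proof (induction k arbitrary: i)
  case 0
  then show ?case
    by (simp add: local_gluing_empty)
next
  case (Suc k)
  have interval: "{i..<i + Suc k} = insert i {Suc i..<Suc i + k}"
    by auto
  have "local_gluing (fst (comp_up Vs Es Ks (Suc i) k)) (snd (comp_up Vs Es Ks (Suc i) k)) Vs Es
      {Suc i..<Suc i + k}"
    using Suc.prems by (intro Suc.IH) (auto simp: interval)
  then show ?case
    using Suc.prems unfolding interval
    by (auto intro!: local_gluing_compose)
qed

lemma local_gluing_comp_down:
  assumes "1 \<le> k"
    and "\<forall>r\<in>{1..k}. graph (Vs r) (Es r)"
    and "\<forall>r\<in>{2..k}. split_graph (Vs r) (Es r) (Ks r) (Is r)"
    and "\<forall>r\<in>{1..k}. \<forall>s\<in>{1..k}. r \<noteq> s \<longrightarrow> Vs r \<inter> Vs s = {}"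
  shows "local_gluing (fst (comp_down Vs Es Ks k)) (snd (comp_down Vs Es Ks k)) Vs Es {1..k}"
  using assms
proof (induction k rule: nat_induct_at_least)
  case base
  then show ?case
    using local_gluing_singleton[of Vs 1 Es] by (simp add: compose_def)
next
  case (Suc k)
  have interval: "{1..Suc k} = insert (Suc k) {1..k}"
    by auto
  have "local_gluing (fst (comp_down Vs Es Ks k)) (snd (comp_down Vs Es Ks k)) Vs Es {1..k}"
    using Suc by (intro Suc.IH) auto
  then show ?case
    using Suc unfolding interval
    by (auto intro!: local_gluing_compose)
qed

lemma local_gluing_two_switch:
  assumes gluing: "local_gluing V E Vs Es J" and sw: "two_switch V E a b c d"
  obtains r where "r \<in> J" "two_switch (Vs r) (Es r) a b c d"
proof -
  obtain r where r: "r \<in> J" "{a, b, c, d} \<subseteq> Vs r"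
    using local_gluing_switch[OF gluing sw] ..
  moreover have "Vs r \<subseteq> V"
    using local_gluing_vertices[OF gluing] r(1) by blast
  ultimately have "two_switch (Vs r) (Es r) a b c d"
    using sw two_switch_cong[OF r(2) _ subset_refl local_gluing_edges[OF gluing r(1) subset_refl]]
    by blast
  with r(1) show thesis
    by (rule that)
qed

lemma local_gluing_P4s:
  assumes gluing: "local_gluing V E Vs Es J"
  shows "P4s V E u v = (\<Union>r\<in>J. P4s (Vs r) (Es r) u v)"
proof -
  note V = local_gluing_vertices[OF gluing] and edges = local_gluing_edges[OF gluing]
  have "W \<in> P4s V E u v \<longleftrightarrow> (\<exists>r\<in>J. W \<in> P4s (Vs r) (Es r) u v)" for W
  proof
    assume W: "W \<in> P4s V E u v"
    then have "W \<subseteq> V" "induces_P4 E W"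
      by (simp_all add: P4s_def)
    then obtain a b c d where "W = {a, b, c, d}" "two_switch V E a b c d"
      by (rule induces_P4_two_switch)
    then obtain r where r: "r \<in> J" "W \<subseteq> Vs r"
      using local_gluing_switch[OF gluing] by metis
    with W have "W \<in> P4s (Vs r) (Es r) u v"
      using induces_P4_cong[OF edges[OF r]] by (simp add: P4s_def)
    with r(1) show "\<exists>r\<in>J. W \<in> P4s (Vs r) (Es r) u v" ..
  next
    assume "\<exists>r\<in>J. W \<in> P4s (Vs r) (Es r) u v"
    then obtain r where r: "r \<in> J" "W \<in> P4s (Vs r) (Es r) u v" ..
    then have "W \<subseteq> Vs r"
      by (simp add: P4s_def)
    with r show "W \<in> P4s V E u v"
      using induces_P4_cong[OF edges[OF r(1)]] V by (auto simp: P4s_def)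
  qed
  then show ?thesis
    by blast
qed

lemma local_gluing_sigma:
  assumes gluing: "local_gluing V E Vs Es J" and "finite J"
    and disjoint: "\<forall>r\<in>J. \<forall>s\<in>J. r \<noteq> s \<longrightarrow> Vs r \<inter> Vs s = {}"
  shows "sigma V E u v = (\<Sum>r\<in>J. sigma (Vs r) (Es r) u v)"
proof -
  have "finite (P4s (Vs r) (Es r) u v)" if "r \<in> J" for r
  proof (rule finite_subset)
    show "P4s (Vs r) (Es r) u v \<subseteq> P4s V E u v"
      using that unfolding local_gluing_P4s[OF gluing] by blast
  qed (rule finite_P4s[OF local_gluing_graph[OF gluing]])
  moreover have "P4s (Vs r) (Es r) u v \<inter> P4s (Vs s) (Es s) u v = {}"
    if "r \<in> J" "s \<in> J" "r \<noteq> s" for r s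
  proof -
    have "Vs r \<inter> Vs s = {}"
      using disjoint that by blast
    then show ?thesis
      by (auto simp: P4s_def)
  qed
  ultimately show ?thesis
    unfolding sigma_eq_card_P4s local_gluing_P4s[OF gluing]
    by (intro card_UN_disjoint \<open>finite J\<close> ballI impI)
qed

lemma local_gluing_active:
  assumes gluing: "local_gluing V E Vs Es J"
    and disjoint: "\<forall>r\<in>J. \<forall>s\<in>J. r \<noteq> s \<longrightarrow> Vs r \<inter> Vs s = {}"
    and "active V E" and "r \<in> J"
  shows "active (Vs r) (Es r)"
  unfolding active_def
proof
  fix v assume v: "v \<in> Vs r"
  with \<open>r \<in> J\<close> have "v \<in> V"
    using local_gluing_vertices[OF gluing] by blast
  with \<open>active V E\<close> obtain a b c d where sw: "two_switch V E a b c d" "v \<in> {a, b, c, d}"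
    unfolding active_def active_vertex_def by blast
  obtain s where s: "s \<in> J" "two_switch (Vs s) (Es s) a b c d"
    using local_gluing_two_switch[OF gluing sw(1)] .
  with sw(2) have "v \<in> Vs s"
    by (auto simp: two_switch_def)
  with v s(1) \<open>r \<in> J\<close> disjoint have "s = r"
    by blast
  with s sw(2) show "active_vertex (Vs r) (Es r) v"
    unfolding active_vertex_def by blast
qed

lemma sigma_eq_0_if_not_vertex: "u \<notin> V \<or> v \<notin> V \<Longrightarrow> sigma V E u v = 0"
proof -
  assume "u \<notin> V \<or> v \<notin> V"
  then have "P4s V E u v = {}"
    by (auto simp: P4s_def)
  then show ?thesis
    by (simp add: sigma_eq_card_P4s)
qed

lemma factor_graph_comp_up:
  assumes split: "\<forall>i\<in>{1..n}. split_graph (Vs i) (Es i) (Ks i) (Is i)"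
    and disjoint: "\<forall>i\<in>{1..n}. \<forall>j\<in>{1..n}. i \<noteq> j \<longrightarrow> Vs i \<inter> Vs j = {}"
  shows "factor_graph (\<Union>i\<in>{1..n}. Ks i) (\<Union>i\<in>{1..n}. Is i) (snd (comp_up Vs Es Ks 1 n))
    = (\<Union>i\<in>{1..n}. Is i, \<lambda>u v. \<Sum>i\<in>{1..n}. snd (factor_graph (Ks i) (Is i) (Es i)) u v)"
proof -
  define G where "G = comp_up Vs Es Ks 1 n"
  define I where "I = (\<Union>i\<in>{1..n}. Is i)"
  have "{1..<1 + n} = {1..n}"
    by auto
  then have gluing: "local_gluing (fst G) (snd G) Vs Es {1..n}"
    using local_gluing_comp_up[of 1 n Vs Es Ks Is] split disjoint by (simp add: G_def)
  have V_i: "Vs i = Ks i \<union> Is i" if "i \<in> {1..n}" for i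
    using split that by (simp add: split_graph_def)
  have vertices: "(\<Union>i\<in>{1..n}. Ks i) \<union> I = fst G"
    using local_gluing_vertices[OF gluing] V_i by (auto simp: I_def)
  have I_in_factor: "w \<in> Is i" if "w \<in> I" "w \<in> Vs i" "i \<in> {1..n}" for w i
  proof -
    obtain j where j: "j \<in> {1..n}" "w \<in> Is j"
      using \<open>w \<in> I\<close> by (auto simp: I_def)
    then have "w \<in> Vs j"
      using V_i by blast
    with that disjoint j(1) have "j = i"
      by blast
    with j(2) show ?thesis
      by simp
  qed
  have summand: "snd (factor_graph (Ks i) (Is i) (Es i)) u v
      = (if u \<in> I \<and> v \<in> I \<and> u \<noteq> v then sigma (Vs i) (Es i) u v else 0)"
    if "i \<in> {1..n}" for i u v
  proof (cases "u \<in> Is i \<and> v \<in> Is i")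
    case True
    then show ?thesis
      using that V_i by (auto simp: factor_graph_def I_def)
  next
    case False
    then have "u \<in> I \<and> v \<in> I \<longrightarrow> u \<notin> Vs i \<or> v \<notin> Vs i"
      using I_in_factor that by metis
    with False show ?thesis
      by (auto simp: factor_graph_def sigma_eq_0_if_not_vertex)
  qed
  have "(if u \<in> I \<and> v \<in> I \<and> u \<noteq> v then sigma (fst G) (snd G) u v else 0)
      = (\<Sum>i\<in>{1..n}. snd (factor_graph (Ks i) (Is i) (Es i)) u v)" for u v
  proof (cases "u \<in> I \<and> v \<in> I \<and> u \<noteq> v")
    case True
    have "(\<Sum>i\<in>{1..n}. snd (factor_graph (Ks i) (Is i) (Es i)) u v) = (\<Sum>i\<in>{1..n}. sigma (Vs i) (Es i) u v)"
      by (rule sum.cong) (use True in \<open>simp_all add: summand\<close>)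
    with True show ?thesis
      using local_gluing_sigma[OF gluing _ disjoint] by simp
  next
    case False
    have "(\<Sum>i\<in>{1..n}. snd (factor_graph (Ks i) (Is i) (Es i)) u v) = 0"
      by (rule sum.neutral) (use False in \<open>auto simp: summand\<close>)
    with False show ?thesis
      by auto
  qed
  then show ?thesis
    unfolding G_def[symmetric] I_def[symmetric] factor_graph_def[of "\<Union>i\<in>{1..n}. Ks i" I] vertices
    by simp
qed

lemma comp_down_factor_prime:
  assumes "active V E" and "(V, E) = comp_down Vs Es Ks n" and "1 \<le> n"
    and "\<forall>r\<in>{1..n}. graph (Vs r) (Es r) \<and> \<not> decomposable (Vs r) (Es r)"
    and "\<forall>r\<in>{2..n}. split_graph (Vs r) (Es r) (Ks r) (Is r)"
    and disjoint: "\<forall>r\<in>{1..n}. \<forall>s\<in>{1..n}. r \<noteq> s \<longrightarrow> Vs r \<inter> Vs s = {}"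
    and "r \<in> {1..n}"
  shows "prime_graph (Vs r) (Es r)"
proof -
  have "V = fst (comp_down Vs Es Ks n)" "E = snd (comp_down Vs Es Ks n)"
    using assms(2) by (simp_all add: prod_eq_iff)
  then have "local_gluing V E Vs Es {1..n}"
    using local_gluing_comp_down[of n Vs Es Ks Is] assms(3-6) by simp
  then have "active (Vs r) (Es r)"
    using local_gluing_active[OF _ disjoint assms(1,7)] by simp
  with assms(4,7) show ?thesis
    by (simp add: prime_graph_def)
qed

section \<open>The factor graph of a split graph\<close>

locale split_structure =
  fixes V :: "'a set" and E K I
  assumes split: "split_graph V E K I"
begin

lemma graph: "graph V E"
  and V_eq: "V = K \<union> I"
  and K_I_disjoint: "K \<inter> I = {}"
  and clique: "x \<in> K \<Longrightarrow> y \<in> K \<Longrightarrow> x \<noteq> y \<Longrightarrow> {x, y} \<in> E"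
  and independent: "x \<in> I \<Longrightarrow> y \<in> I \<Longrightarrow> {x, y} \<notin> E"
  using split by (auto simp: split_graph_def)

definition nbr :: "'a \<Rightarrow> 'a set" where
  "nbr w = {k \<in> K. {w, k} \<in> E}"

definition incomparable :: "('a \<times> 'a) set" where
  "incomparable = {(x, y). x \<in> I \<and> y \<in> I \<and> \<not> nbr x \<subseteq> nbr y \<and> \<not> nbr y \<subseteq> nbr x}"

lemma sym_incomparable: "sym incomparable"
  by (auto intro: symI simp: incomparable_def)

lemma incomparable_rtrancl_in_I: "(u, v) \<in> incomparable\<^sup>* \<Longrightarrow> u \<in> I \<Longrightarrow> v \<in> I"
  by (induction rule: rtrancl_induct) (auto simp: incomparable_def)

lemma two_switch_shape:
  assumes "two_switch V E a b c d"
  shows "a \<in> I \<and> b \<in> K \<and> c \<in> K \<and> d \<in> I \<or> a \<in> K \<and> b \<in> I \<and> c \<in> I \<and> d \<in> K"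
proof -
  have "a \<in> V" "b \<in> V" "c \<in> V" "d \<in> V" "a \<noteq> c" "b \<noteq> d"
    and "{a, b} \<in> E" "{c, d} \<in> E" "{a, c} \<notin> E" "{b, d} \<notin> E"
    using assms by (auto simp: two_switch_def)
  then have "\<not> (a \<in> K \<and> c \<in> K)" "\<not> (b \<in> K \<and> d \<in> K)" "\<not> (a \<in> I \<and> b \<in> I)" "\<not> (c \<in> I \<and> d \<in> I)"
    and "a \<in> K \<union> I" "b \<in> K \<union> I" "c \<in> K \<union> I" "d \<in> K \<union> I"
    using clique independent V_eq by blast+
  with K_I_disjoint show ?thesis
    by blast
qed

lemma two_switch_incomparable:
  assumes sw: "two_switch V E a b c d"
  obtains x y where "{a, b, c, d} \<inter> I = {x, y}" "(x, y) \<in> incomparable"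
proof -
  have "{a, b} \<in> E" "{b, a} \<in> E" "{c, d} \<in> E" "{d, c} \<in> E"
    and "{a, c} \<notin> E" "{c, a} \<notin> E" "{b, d} \<notin> E" "{d, b} \<notin> E"
    using sw by (auto simp: two_switch_def insert_commute)
  note edges = this
  from two_switch_shape[OF sw] show thesis
  proof
    assume shape: "a \<in> I \<and> b \<in> K \<and> c \<in> K \<and> d \<in> I"
    with K_I_disjoint have "{a, b, c, d} \<inter> I = {a, d}"
      by blast
    moreover from shape edges have "(a, d) \<in> incomparable"
      by (auto simp: incomparable_def nbr_def)
    ultimately show thesis
      by (rule that)
  next
    assume shape: "a \<in> K \<and> b \<in> I \<and> c \<in> I \<and> d \<in> K"
    with K_I_disjoint have "{a, b, c, d} \<inter> I = {b, c}"
      by blast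
    moreover from shape edges have "(b, c) \<in> incomparable"
      by (auto simp: incomparable_def nbr_def)
    ultimately show thesis
      by (rule that)
  qed
qed

lemma nbr_nonempty:
  assumes "active V E" "w \<in> I"
  shows "nbr w \<noteq> {}"
proof -
  from assms obtain a b c d where sw: "two_switch V E a b c d" "w \<in> {a, b, c, d}"
    unfolding active_def active_vertex_def V_eq by blast
  obtain x y where "{a, b, c, d} \<inter> I = {x, y}" "(x, y) \<in> incomparable"
    using sw(1) by (rule two_switch_incomparable)
  with sw(2) \<open>w \<in> I\<close> show ?thesis
    by (auto simp: incomparable_def)
qed

text \<open>Two incomparable neighbourhoods give the induced path x - k1 - k2 - y.\<close>
lemma sigma_pos_if_incomparable:
  assumes "(x, y) \<in> incomparable"
  shows "1 \<le> sigma V E x y"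
proof -
  obtain k1 k2 where x: "x \<in> I" "k1 \<in> K" "{x, k1} \<in> E" "{x, k2} \<notin> E"
    and y: "y \<in> I" "k2 \<in> K" "{y, k2} \<in> E" "{y, k1} \<notin> E"
    using assms unfolding incomparable_def nbr_def by blast
  with K_I_disjoint have distinct: "distinct [x, k1, k2, y]"
    using independent by auto
  define W where "W = {x, k1, k2, y}"
  have "{e \<in> E. e \<subseteq> W} = {{x, k1}, {k1, k2}, {k2, y}}"
  proof (intro equalityI subsetI)
    fix e assume e: "e \<in> {e \<in> E. e \<subseteq> W}"
    then obtain p q where "e = {p, q}" "p \<noteq> q"
      using graph_edgeE[OF graph] by blast
    with e x y show "e \<in> {{x, k1}, {k1, k2}, {k2, y}}"
      using independent unfolding W_def by (auto simp: insert_commute)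
  next
    fix e assume "e \<in> {{x, k1}, {k1, k2}, {k2, y}}"
    with x y distinct show "e \<in> {e \<in> E. e \<subseteq> W}"
      using clique unfolding W_def by (auto simp: insert_commute)
  qed
  with distinct have "induces_P4 E W"
    unfolding induces_P4_def W_def by blast
  moreover have "W \<subseteq> V"
    using x y V_eq unfolding W_def by blast
  ultimately have "W \<in> P4s V E x y"
    by (simp add: P4s_def W_def)
  then show ?thesis
    using sigma_pos_iff[OF graph] by blast
qed

lemma incomparable_if_sigma_pos:
  assumes "x \<in> I" "y \<in> I" "x \<noteq> y" "1 \<le> sigma V E x y"
  shows "(x, y) \<in> incomparable"
proof -
  obtain W where W: "W \<subseteq> V" "induces_P4 E W" "x \<in> W" "y \<in> W"
    using assms(4) sigma_pos_iff[OF graph] unfolding P4s_def by blast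
  obtain a b c d where W_eq: "W = {a, b, c, d}" and sw: "two_switch V E a b c d"
    using W(1,2) by (rule induces_P4_two_switch)
  obtain p q where pq: "W \<inter> I = {p, q}" "(p, q) \<in> incomparable"
    using sw unfolding W_eq by (rule two_switch_incomparable)
  from pq(1) W(3,4) assms(1,2) have "x \<in> {p, q}" "y \<in> {p, q}"
    by blast+
  with \<open>x \<noteq> y\<close> have "(x, y) = (p, q) \<or> (x, y) = (q, p)"
    by auto
  with pq(2) show ?thesis
    using symD[OF sym_incomparable] by blast
qed

lemma incomparable_iff_sigma_pos:
  "(x, y) \<in> incomparable \<longleftrightarrow> x \<in> I \<and> y \<in> I \<and> x \<noteq> y \<and> 1 \<le> sigma V E x y"
proof
  assume xy: "(x, y) \<in> incomparable"
  then have "x \<in> I" "y \<in> I" "x \<noteq> y"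
    unfolding incomparable_def by auto
  with sigma_pos_if_incomparable[OF xy] show "x \<in> I \<and> y \<in> I \<and> x \<noteq> y \<and> 1 \<le> sigma V E x y"
    by blast
qed (use incomparable_if_sigma_pos in blast)

lemma factor_graph_connected_iff:
  "mg_connected (factor_graph K I E) \<longleftrightarrow> (\<forall>u\<in>I. \<forall>v\<in>I. (u, v) \<in> incomparable\<^sup>*)"
proof -
  have "{(x, y). x \<in> I \<and> y \<in> I \<and> snd (factor_graph K I E) x y \<ge> 1} = incomparable"
    by (auto simp: factor_graph_def V_eq[symmetric] incomparable_iff_sigma_pos)
  then show ?thesis
    by (simp add: mg_connected_def factor_graph_def)
qed

context
  fixes K1 I1
  assumes K1_sub: "K1 \<subseteq> K" and I1_sub: "I1 \<subseteq> I"
    and nbr_I1: "\<And>w. w \<in> I1 \<Longrightarrow> nbr w \<subseteq> K1"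
    and nbr_rest: "\<And>w. w \<in> I - I1 \<Longrightarrow> K1 \<subseteq> nbr w"
begin

lemma edge_from_lower_part:
  assumes "p \<in> K1 \<union> I1" "q \<in> V - (K1 \<union> I1)" "{p, q} \<in> E"
  shows "p \<in> K1"
proof (rule ccontr)
  assume "p \<notin> K1"
  with assms(1) have "p \<in> I1"
    by blast
  with assms(2,3) I1_sub independent have "q \<in> K"
    by (auto simp: V_eq)
  with assms(3) have "q \<in> nbr p"
    by (simp add: nbr_def)
  with nbr_I1[OF \<open>p \<in> I1\<close>] assms(2) show False
    by blast
qed

lemma edge_to_upper_part:
  assumes "x \<in> K1" "y \<in> V - (K1 \<union> I1)"
  shows "{x, y} \<in> E"
proof (cases "y \<in> K")
  case True
  with assms K1_sub show ?thesis
    using clique by blast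
next
  case False
  with assms(2) have "y \<in> I - I1"
    by (auto simp: V_eq)
  with nbr_rest assms(1) have "x \<in> nbr y"
    by blast
  then show ?thesis
    by (simp add: nbr_def insert_commute)
qed

lemma compose_partition:
  defines "VS \<equiv> K1 \<union> I1" and "VH \<equiv> V - (K1 \<union> I1)"
  shows "(V, E) = compose VS {e \<in> E. e \<subseteq> VS} K1 (VH, {e \<in> E. e \<subseteq> VH})"
proof -
  have V_parts: "V = VS \<union> VH"
    using K1_sub I1_sub by (auto simp: VS_def VH_def V_eq)
  have cross: "{x, y} \<in> {{x, y} | x y. x \<in> K1 \<and> y \<in> VH}"
    if "x \<in> VS" "y \<in> VH" "{x, y} \<in> E" for x y
    using edge_from_lower_part[of x y] that by (auto simp: VS_def VH_def)
  have "E \<subseteq> {e \<in> E. e \<subseteq> VS} \<union> {e \<in> E. e \<subseteq> VH} \<union> {{x, y} | x y. x \<in> K1 \<and> y \<in> VH}"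
  proof
    fix e assume "e \<in> E"
    then obtain p q where e: "e = {p, q}" "p \<in> V" "q \<in> V"
      using graph_edgeE[OF graph] by metis
    have "p \<in> VS \<and> q \<in> VS \<or> p \<in> VH \<and> q \<in> VH \<or> p \<in> VS \<and> q \<in> VH \<or> q \<in> VS \<and> p \<in> VH"
      using e(2,3) V_parts by blast
    moreover have "{q, p} = e"
      using e(1) by (simp add: insert_commute)
    ultimately show "e \<in> {e \<in> E. e \<subseteq> VS} \<union> {e \<in> E. e \<subseteq> VH} \<union> {{x, y} | x y. x \<in> K1 \<and> y \<in> VH}"
      using \<open>e \<in> E\<close> e(1) cross[of p q] cross[of q p] by auto
  qed
  moreover have "{{x, y} | x y. x \<in> K1 \<and> y \<in> VH} \<subseteq> E"
    using edge_to_upper_part by (auto simp: VH_def)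
  ultimately have "E = {e \<in> E. e \<subseteq> VS} \<union> {e \<in> E. e \<subseteq> VH} \<union> {{x, y} | x y. x \<in> K1 \<and> y \<in> VH}"
    by blast
  with V_parts show ?thesis
    by (simp add: compose_def)
qed

lemma decomposable_if_partition:
  assumes "K1 \<union> I1 \<noteq> {}" and "K1 \<union> I1 \<noteq> V"
  shows "decomposable V E"
proof -
  define VS where "VS = K1 \<union> I1"
  define VH where "VH = V - (K1 \<union> I1)"
  have "VS \<subseteq> V"
    using K1_sub I1_sub by (auto simp: VS_def V_eq)
  then have "split_graph VS {e \<in> E. e \<subseteq> VS} K1 I1"
    unfolding split_graph_def
  proof (intro conjI ballI impI)
    show "graph VS {e \<in> E. e \<subseteq> VS}"
      using graph_induced[OF graph \<open>VS \<subseteq> V\<close>] .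
    show "K1 \<inter> I1 = {}"
      using K1_sub I1_sub K_I_disjoint by blast
    show "{x, y} \<in> {e \<in> E. e \<subseteq> VS}" if "x \<in> K1" "y \<in> K1" "x \<noteq> y" for x y
      using that K1_sub clique by (auto simp: VS_def)
    show "{x, y} \<notin> {e \<in> E. e \<subseteq> VS}" if "x \<in> I1" "y \<in> I1" for x y
      using that I1_sub independent by blast
  qed (simp add: VS_def)
  moreover have "graph VH {e \<in> E. e \<subseteq> VH}"
    by (rule graph_induced[OF graph]) (simp add: VH_def)
  moreover have "VS \<noteq> {}" "VH \<noteq> {}" "VS \<inter> VH = {}"
    using assms \<open>VS \<subseteq> V\<close> by (auto simp: VS_def VH_def)
  ultimately show ?thesis
    unfolding decomposable_def using compose_partition[folded VS_def VH_def] by blast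
qed

end

lemma nbr_below_along_path:
  assumes "(u0, u) \<in> incomparable\<^sup>*" and "(u0, v0) \<notin> incomparable\<^sup>*"
    and "v0 \<in> I" and "nbr u0 \<subseteq> nbr v0"
  shows "nbr u \<subseteq> nbr v0"
  using assms(1)
proof (induction rule: rtrancl_induct)
  case base
  from assms(4) show ?case .
next
  case (step y z)
  from step.hyps have "(u0, z) \<in> incomparable\<^sup>*"
    by (rule rtrancl_into_rtrancl)
  have "(z, v0) \<notin> incomparable"
  proof
    assume "(z, v0) \<in> incomparable"
    with \<open>(u0, z) \<in> incomparable\<^sup>*\<close> have "(u0, v0) \<in> incomparable\<^sup>*"
      by (rule rtrancl_into_rtrancl)
    with assms(2) show False
      by contradiction
  qed
  moreover have "z \<in> I"
    using \<open>(y, z) \<in> incomparable\<close> by (simp add: incomparable_def)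
  ultimately have "nbr z \<subseteq> nbr v0 \<or> nbr v0 \<subseteq> nbr z"
    using \<open>v0 \<in> I\<close> by (auto simp: incomparable_def)
  moreover have "\<not> nbr y \<subseteq> nbr z"
    using \<open>(y, z) \<in> incomparable\<close> by (simp add: incomparable_def)
  ultimately show ?case
    using step.IH by blast
qed

text \<open>K1 collects the neighbourhoods along the component of u0. By comparability, every vertex of I
  outside that component has its neighbourhood below K1 or containing all of K1.\<close>
lemma decomposable_if_disconnected:
  assumes "active V E" and "u0 \<in> I" and "v0 \<in> I"
    and "(u0, v0) \<notin> incomparable\<^sup>*" and "nbr u0 \<subseteq> nbr v0"
  shows "decomposable V E"
proof -
  define C where "C = {u. (u0, u) \<in> incomparable\<^sup>*}"
  define K1 where "K1 = (\<Union>u\<in>C. nbr u)"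
  define I1 where "I1 = {w \<in> I. \<not> K1 \<subseteq> nbr w}"
  have C_I: "C \<subseteq> I"
    using incomparable_rtrancl_in_I \<open>u0 \<in> I\<close> by (auto simp: C_def)
  have K1_below_v0: "K1 \<subseteq> nbr v0"
    using nbr_below_along_path[OF _ assms(4,3,5)] by (auto simp: K1_def C_def)
  have nbr_I1: "nbr w \<subseteq> K1" if "w \<in> I1" for w
  proof (cases "w \<in> C")
    case True
    then show ?thesis
      by (auto simp: K1_def)
  next
    case False
    from that obtain u where u: "u \<in> C" "\<not> nbr u \<subseteq> nbr w"
      by (auto simp: I1_def K1_def)
    have "(u, w) \<notin> incomparable"
      using u(1) False rtrancl_into_rtrancl[of u0 u incomparable w] by (auto simp: C_def)
    with u C_I that have "nbr w \<subseteq> nbr u"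
      by (auto simp: incomparable_def I1_def)
    with u(1) show ?thesis
      by (auto simp: K1_def)
  qed
  have "nbr u0 \<subseteq> K1"
    by (auto simp: K1_def C_def)
  with nbr_nonempty[OF assms(1,2)] have "K1 \<union> I1 \<noteq> {}"
    by blast
  moreover have "v0 \<notin> K1 \<union> I1"
    using K1_below_v0 \<open>v0 \<in> I\<close> K_I_disjoint by (auto simp: I1_def K1_def nbr_def)
  with \<open>v0 \<in> I\<close> have "K1 \<union> I1 \<noteq> V"
    by (auto simp: V_eq)
  moreover have "K1 \<subseteq> K" "I1 \<subseteq> I" "\<And>w. w \<in> I - I1 \<Longrightarrow> K1 \<subseteq> nbr w"
    by (auto simp: K1_def nbr_def I1_def)
  ultimately show ?thesis
    using decomposable_if_partition nbr_I1 by blast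
qed

lemma composition_part_meets_I:
  assumes "active V E" and comp: "tyshkevich_composition V E VS ES K' I' VH EH"
    and "X = VS \<or> X = VH" and "X \<noteq> {}"
  shows "X \<inter> I \<noteq> {}"
proof -
  interpret C: tyshkevich_composition V E VS ES K' I' VH EH
    by (fact comp)
  obtain z where "z \<in> X"
    using \<open>X \<noteq> {}\<close> by blast
  with assms(3) have "z \<in> V"
    by (auto simp: C.V_eq)
  with \<open>active V E\<close> obtain a b c d where sw: "two_switch V E a b c d" "z \<in> {a, b, c, d}"
    unfolding active_def active_vertex_def by blast
  from C.two_switch_within_part[OF sw(1)] sw(2) \<open>z \<in> X\<close> assms(3) C.disjoint
  have "{a, b, c, d} \<subseteq> X"
    by blast
  moreover obtain x y where "{a, b, c, d} \<inter> I = {x, y}"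
    using sw(1) by (rule two_switch_incomparable)
  ultimately show ?thesis
    by blast
qed

lemma composition_incomparable_in_part:
  assumes comp: "tyshkevich_composition V E VS ES K' I' VH EH"
    and "(w, z) \<in> incomparable" and "w \<in> VS"
  shows "z \<in> VS"
proof -
  interpret C: tyshkevich_composition V E VS ES K' I' VH EH
    by (fact comp)
  obtain W where W: "W \<subseteq> V" "induces_P4 E W" "w \<in> W" "z \<in> W"
    using sigma_pos_if_incomparable[OF assms(2)] sigma_pos_iff[OF graph]
    unfolding P4s_def by blast
  with C.induces_P4_within_part[OF W(1,2)] \<open>w \<in> VS\<close> C.disjoint show ?thesis
    by blast
qed

lemma not_decomposable_if_connected:
  assumes "active V E" and connected: "\<forall>u\<in>I. \<forall>v\<in>I. (u, v) \<in> incomparable\<^sup>*"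
  shows "\<not> decomposable V E"
proof
  assume "decomposable V E"
  then obtain VS ES K' I' VH EH where "split_graph VS ES K' I'" "graph VH EH"
    and "VS \<noteq> {}" "VH \<noteq> {}" "VS \<inter> VH = {}" "(V, E) = compose VS ES K' (VH, EH)"
    unfolding decomposable_def by blast
  then have comp: "tyshkevich_composition V E VS ES K' I' VH EH"
    by unfold_locales
  obtain x where "x \<in> VS" "x \<in> I"
    using composition_part_meets_I[OF \<open>active V E\<close> comp, of VS] \<open>VS \<noteq> {}\<close> by blast
  obtain y where "y \<in> VH" "y \<in> I"
    using composition_part_meets_I[OF \<open>active V E\<close> comp, of VH] \<open>VH \<noteq> {}\<close> by blast
  from connected \<open>x \<in> I\<close> \<open>y \<in> I\<close> have "(x, y) \<in> incomparable\<^sup>*"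
    by blast
  then have "y \<in> VS"
  proof (induction rule: rtrancl_induct)
    case base
    from \<open>x \<in> VS\<close> show ?case .
  next
    case (step w z)
    from comp step.hyps(2) step.IH show ?case
      by (rule composition_incomparable_in_part)
  qed
  with \<open>y \<in> VH\<close> \<open>VS \<inter> VH = {}\<close> show False
    by blast
qed

theorem prime_iff_factor_graph_connected:
  assumes "active V E"
  shows "prime_graph V E \<longleftrightarrow> mg_connected (factor_graph K I E)"
  unfolding factor_graph_connected_iff prime_graph_def
proof (intro iffI ballI)
  fix u v assume "active V E \<and> \<not> decomposable V E" "u \<in> I" "v \<in> I"
  show "(u, v) \<in> incomparable\<^sup>*"
  proof (rule ccontr)
    assume not_uv: "(u, v) \<notin> incomparable\<^sup>*"
    then have "(v, u) \<notin> incomparable\<^sup>*"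
      using symD[OF sym_rtrancl[OF sym_incomparable]] by blast
    moreover from not_uv \<open>u \<in> I\<close> \<open>v \<in> I\<close> have "nbr u \<subseteq> nbr v \<or> nbr v \<subseteq> nbr u"
      by (auto simp: incomparable_def)
    ultimately have "decomposable V E"
      using decomposable_if_disconnected[OF assms] not_uv \<open>u \<in> I\<close> \<open>v \<in> I\<close> by blast
    with \<open>active V E \<and> \<not> decomposable V E\<close> show False
      by blast
  qed
qed (use assms not_decomposable_if_connected in blast)

end

theorem theorem2p7:
  shows "(\<forall>(V :: 'a set) E K I. split_graph V E K I \<and> active V E \<longrightarrow>
            (prime_graph V E \<longleftrightarrow> mg_connected (factor_graph K I E)))
       \<and> (\<forall>(n :: nat) (Vs :: nat \<Rightarrow> 'a set) Es Ks Is.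
            (\<forall>i\<in>{1..n}. split_graph (Vs i) (Es i) (Ks i) (Is i) \<and> prime_graph (Vs i) (Es i))
            \<and> (\<forall>i\<in>{1..n}. \<forall>j\<in>{1..n}. i \<noteq> j \<longrightarrow> Vs i \<inter> Vs j = {})
            \<longrightarrow> factor_graph (\<Union>i\<in>{1..n}. Ks i) (\<Union>i\<in>{1..n}. Is i) (snd (comp_up Vs Es Ks 1 n))
                = (\<Union>i\<in>{1..n}. Is i,
                   \<lambda>u v. \<Sum>i\<in>{1..n}. snd (factor_graph (Ks i) (Is i) (Es i)) u v))
       \<and> (\<forall>(V :: 'a set) E (n :: nat) Vs Es Ks Is.
            graph V E \<and> active V E \<and> n \<ge> 1
            \<and> (\<forall>r\<in>{1..n}. graph (Vs r) (Es r) \<and> Vs r \<noteq> {} \<and> \<not> decomposable (Vs r) (Es r))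
            \<and> (\<forall>r\<in>{2..n}. split_graph (Vs r) (Es r) (Ks r) (Is r))
            \<and> (\<forall>r\<in>{1..n}. \<forall>s\<in>{1..n}. r \<noteq> s \<longrightarrow> Vs r \<inter> Vs s = {})
            \<and> (V, E) = comp_down Vs Es Ks n
            \<longrightarrow> (\<forall>r\<in>{1..n}. prime_graph (Vs r) (Es r)))"
  apply (intro conjI allI impI)
  subgoal
    by (metis split_structure.intro split_structure.prime_iff_factor_graph_connected)
  subgoal
    by (intro factor_graph_comp_up) auto
  subgoal
    by (intro ballI comp_down_factor_prime; blast)
  done

end
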